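(* Let $0<p<1$, let $u_1,\dots,u_4,v_1,\dots,v_4$ be real numbers with $u_r>0$ and $|v_r|<u_r+\tfrac12$ for $r=1,2$, let $\textsc{m}\in\mathbb{N}$, and put $\alpha=\pi/(u_1+u_2+\textsc{m})$. Then for every $k\in\{1,\dots,\textsc{m}\}$ the numbers $$a_k=\prod_{r=1}^4\frac{[u_1-u_r+k]_r\,[u_1-v_r-\frac12+k]_r}{[u_1+k]_r\,[u_1-\frac12+k]_r},\qquad \tilde a_k=\prod_{r=1}^4\frac{[u_2-u_{\pi_2(r)}+k]_r\,[u_2-v_{\pi_2(r)}-\frac12+k]_r}{[u_2+k]_r\,[u_2-\frac12+k]_r}$$ are (well defined and) strictly positive.
   Context: Jacobi theta functions with nome $0<p<1$: $\theta_1(z)=2p^{1/4}\sin z\prod_{n\ge1}(1-p^{2n})(1-2p^{2n}\cos 2z+p^{4n})$, $\theta_2(z)=2p^{1/4}\cos z\prod_{n\ge1}(1-p^{2n})(1+2p^{2n}\cos 2z+p^{4n})$, $\theta_3(z)=\prod_{n\ge1}(1-p^{2n})(1+2p^{2n-1}\cos 2z+p^{4n-2})$, $\theta_4(z)=\prod_{n\ge1}(1-p^{2n})(1-2p^{2n-1}\cos 2z+p^{4n-2})$. Rescaled theta functions: $[z]_1=\theta_1(\frac{\alpha}{2}z)/(\frac{\alpha}{2}\theta_1'(0))$ and $[z]_r=\theta_r(\frac{\alpha}{2}z)/\theta_r(0)$ for $r=2,3,4$. The permutation $\pi_2\in S_4$ is $\pi_2=(12)(34)$. *)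

theory Defs
  imports "HOL-Analysis.Analysis"
begin

text \<open>Jacobi theta functions with nome p (0<p<1), as infinite products over n \<ge> 1
  (the product index m = n - 1 runs over nat).\<close>

definition theta1 :: "real \<Rightarrow> real \<Rightarrow> real" where
  "theta1 p z = 2 * p powr (1/4) * sin z *
     (\<Prod>m. (1 - p ^ (2 * Suc m)) * (1 - 2 * p ^ (2 * Suc m) * cos (2 * z) + p ^ (4 * Suc m)))"

definition theta2 :: "real \<Rightarrow> real \<Rightarrow> real" where
  "theta2 p z = 2 * p powr (1/4) * cos z *
     (\<Prod>m. (1 - p ^ (2 * Suc m)) * (1 + 2 * p ^ (2 * Suc m) * cos (2 * z) + p ^ (4 * Suc m)))"

definition theta3 :: "real \<Rightarrow> real \<Rightarrow> real" where
  "theta3 p z =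
     (\<Prod>m. (1 - p ^ (2 * Suc m)) * (1 + 2 * p ^ (2 * Suc m - 1) * cos (2 * z) + p ^ (4 * Suc m - 2)))"

definition theta4 :: "real \<Rightarrow> real \<Rightarrow> real" where
  "theta4 p z =
     (\<Prod>m. (1 - p ^ (2 * Suc m)) * (1 - 2 * p ^ (2 * Suc m - 1) * cos (2 * z) + p ^ (4 * Suc m - 2)))"

definition rtheta :: "real \<Rightarrow> real \<Rightarrow> nat \<Rightarrow> real \<Rightarrow> real" where
  "rtheta p \<alpha> r z =
     (if r = 1 then theta1 p (\<alpha> / 2 * z) / (\<alpha> / 2 * deriv (theta1 p) 0)
      else if r = 2 then theta2 p (\<alpha> / 2 * z) / theta2 p 0
      else if r = 3 then theta3 p (\<alpha> / 2 * z) / theta3 p 0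
      else theta4 p (\<alpha> / 2 * z) / theta4 p 0)"

definition pi2 :: "nat \<Rightarrow> nat" where
  "pi2 r = (if r = 1 then 2 else if r = 2 then 1 else if r = 3 then 4 else if r = 4 then 3 else r)"

end

theory Submission
  imports Defs
begin

text \<open>Each theta function is sin z, cos z or 1 times an infinite product whose factors are
  positive and lie within O(p^(m+1)) of 1 when 0 < p < 1. The product is therefore positive and,
  by uniform convergence, continuous; so theta1 is positive on (0, pi), theta2 on (-pi/2, pi/2),
  theta3 and theta4 everywhere, and theta1'(0) = 2 p^(1/4) times a positive product. With
  alpha = pi / S, S = u1 + u2 + M, the hypotheses on u and v put every argument of [.]_1 in
  (0, 2S) and every argument of [.]_2 in (-S, S), so every factor of both products is positive.\<close>

lemma continuous_on_prodinf:
  fixes f :: "nat \<Rightarrow> 'a::topological_space \<Rightarrow> 'b::{real_normed_field, banach}"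
  assumes "compact A" "\<And>n. continuous_on A (f n)" "summable M"
    and "\<And>n x. x \<in> A \<Longrightarrow> norm (f n x - 1) \<le> M n" "\<And>n x. x \<in> A \<Longrightarrow> f n x \<noteq> 0"
  shows "continuous_on A (\<lambda>x. \<Prod>n. f n x)"
proof -
  have "uniformly_convergent_on A (\<lambda>N x. \<Sum>n<N. norm (f n x - 1))"
    using assms(3,4) by (intro Weierstrass_m_test'[of A _ M]) auto
  then have "uniformly_convergent_on A (\<lambda>N x. \<Prod>n<N. f n x)"
    using assms(1,2) by (intro uniformly_convergent_on_prod')
  then have limit: "uniform_limit A (\<lambda>N x. \<Prod>n<N. f n x) (\<lambda>x. lim (\<lambda>N. \<Prod>n<N. f n x)) sequentially"
    by (simp add: uniformly_convergent_uniform_limit_iff)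
  have "continuous_on A (\<lambda>x. lim (\<lambda>N. \<Prod>n<N. f n x))"
    using assms(2) by (intro uniform_limit_theorem[OF _ limit] always_eventually allI continuous_on_prod) auto
  moreover have "lim (\<lambda>N. \<Prod>n<N. f n x) = (\<Prod>n. f n x)" if "x \<in> A" for x
  proof (rule prodinf_eq_lim'[symmetric])
    have "summable (\<lambda>n. norm (f n x - 1))"
      using assms(4) that by (intro summable_comparison_test'[OF assms(3)]) auto
    then show "convergent_prod (\<lambda>n. f n x)"
      by (intro abs_convergent_prod_imp_convergent_prod summable_imp_abs_convergent_prod)
  qed (use assms(5) that in auto)
  ultimately show ?thesis
    using continuous_on_cong by fastforce
qed

lemma has_field_derivative_mult_vanishing:
  fixes f g :: "'a::real_normed_field \<Rightarrow> 'a"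
  assumes "(f has_field_derivative D) (at x)" "f x = 0" "isCont g x"
  shows "((\<lambda>y. f y * g y) has_field_derivative D * g x) (at x)"
proof -
  have "((\<lambda>y. (f y - f x) / (y - x) * g y) \<longlongrightarrow> D * g x) (at x)"
    using assms(1,3) by (intro tendsto_mult) (auto simp: has_field_derivative_iff isCont_def)
  then show ?thesis
    using assms(2) by (simp add: has_field_derivative_iff)
qed

text \<open>The n-th factor (n = m + 1) of all four theta products: the exponent e m is 2n for
  theta1 and theta2 and 2n - 1 for theta3 and theta4, and c is plus or minus cos 2z.\<close>

definition theta_factor :: "real \<Rightarrow> (nat \<Rightarrow> nat) \<Rightarrow> real \<Rightarrow> nat \<Rightarrow> real" where
  "theta_factor p e c m = (1 - p ^ (2 * Suc m)) * (1 + 2 * p ^ e m * c + p ^ (2 * e m))"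

definition theta_prod :: "real \<Rightarrow> (nat \<Rightarrow> nat) \<Rightarrow> real \<Rightarrow> real" where
  "theta_prod p e c = (\<Prod>m. theta_factor p e c m)"

lemma theta_factor_pos:
  assumes "0 < p" "p < 1" "0 < e m" "\<bar>c\<bar> \<le> 1"
  shows "0 < theta_factor p e c m"
proof -
  define r where "r = p ^ e m"
  have "0 < r" "r < 1"
    using assms by (auto simp: r_def power_less_one_iff)
  moreover have "- r \<le> c * r"
    using \<open>0 < r\<close> assms(4) mult_right_mono[of "- 1" c r] by (simp add: abs_le_iff)
  moreover have "0 < (1 - r) * (1 - r)"
    using \<open>r < 1\<close> by simp
  ultimately have "0 < 1 + 2 * r * c + r * r"
    by (simp add: algebra_simps)
  moreover have "0 < 1 - p ^ (2 * Suc m)"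
    using assms power_strict_decreasing[of 0 "2 * Suc m" p] by simp
  moreover have "p ^ (2 * e m) = r * r"
    by (simp add: r_def mult_2 power_add)
  ultimately show ?thesis
    by (simp add: theta_factor_def r_def)
qed

lemma theta_factor_dist_one:
  assumes "0 \<le> p" "p \<le> 1" "Suc m \<le> e m" "\<bar>c\<bar> \<le> 1"
  shows "\<bar>theta_factor p e c m - 1\<bar> \<le> 6 * p ^ Suc m"
proof -
  define t where "t = p ^ Suc m"
  define q where "q = p ^ (2 * Suc m)"
  define r where "r = p ^ e m"
  have "0 \<le> q" "q \<le> t" "0 \<le> r" "r \<le> t"
    using assms power_decreasing[of "Suc m" "2 * Suc m" p] power_decreasing[of "Suc m" "e m" p]
    unfolding t_def q_def r_def by auto
  have "t \<le> 1"
    unfolding t_def using assms by (intro power_le_one)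
  define s where "s = 1 + 2 * r * c + r * r"
  have "r \<le> 1"
    using \<open>r \<le> t\<close> \<open>t \<le> 1\<close> by linarith
  have "\<bar>r * c\<bar> \<le> r"
    using \<open>0 \<le> r\<close> assms(4) by (simp add: abs_mult mult_left_le)
  have "0 \<le> r * r" "r * r \<le> r"
    using \<open>0 \<le> r\<close> \<open>r \<le> 1\<close> by (simp_all add: mult_left_le)
  then have "- 2 * t \<le> s - 1" "s - 1 \<le> 3 * t"
    using \<open>\<bar>r * c\<bar> \<le> r\<close> \<open>r \<le> t\<close> unfolding s_def abs_le_iff mult.assoc by linarith+
  have "(1 - r) * (1 - r) = 1 - 2 * r + r * r"
    by (simp add: algebra_simps)
  then have "0 \<le> s"
    using \<open>\<bar>r * c\<bar> \<le> r\<close> zero_le_square[of "1 - r"] unfolding s_def abs_le_iff mult.assoc by linarith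
  have "q * s \<le> t * 4"
    using \<open>0 \<le> s\<close> \<open>0 \<le> q\<close> \<open>q \<le> t\<close> \<open>s - 1 \<le> 3 * t\<close> \<open>t \<le> 1\<close>
    by (intro mult_mono) auto
  moreover have "0 \<le> q * s"
    using \<open>0 \<le> s\<close> \<open>0 \<le> q\<close> by simp
  moreover have "p ^ (2 * e m) = r * r"
    by (simp add: r_def mult_2 power_add)
  then have "theta_factor p e c m - 1 = (s - 1) - q * s"
    unfolding theta_factor_def s_def q_def[symmetric] r_def[symmetric] by (simp add: algebra_simps)
  ultimately show ?thesis
    using \<open>- 2 * t \<le> s - 1\<close> \<open>s - 1 \<le> 3 * t\<close> unfolding t_def abs_le_iff by linarith
qed

lemma convergent_prod_theta_factor:
  assumes "0 < p" "p < 1" "\<And>m. Suc m \<le> e m" "\<bar>c\<bar> \<le> 1"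
  shows "convergent_prod (theta_factor p e c)"
proof -
  have summable: "summable (\<lambda>m. 6 * p ^ Suc m)"
    using assms(1,2) by (intro summable_mult) (simp add: summable_geometric)
  have "norm (theta_factor p e c m - 1) \<le> 6 * p ^ Suc m" for m
    unfolding real_norm_def by (rule theta_factor_dist_one) (use assms in auto)
  then have "summable (\<lambda>m. norm (theta_factor p e c m - 1))"
    by (intro summable_norm_comparison_test[OF _ summable]) blast
  then show ?thesis
    by (intro abs_convergent_prod_imp_convergent_prod summable_imp_abs_convergent_prod)
qed

lemma theta_prod_pos:
  assumes "0 < p" "p < 1" "\<And>m. Suc m \<le> e m" "\<bar>c\<bar> \<le> 1"
  shows "0 < theta_prod p e c"
  unfolding theta_prod_def
proof (rule less_0_prodinf)
  show "convergent_prod (theta_factor p e c)"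
    using assms by (rule convergent_prod_theta_factor)
  show "0 < theta_factor p e c m" for m
    using assms(1,2,4) assms(3)[of m] by (simp add: theta_factor_pos)
qed

lemma continuous_on_theta_prod:
  assumes "0 < p" "p < 1" "\<And>m. Suc m \<le> e m"
  shows "continuous_on {-1..1} (theta_prod p e)"
  unfolding theta_prod_def
proof (rule continuous_on_prodinf)
  show "summable (\<lambda>m. 6 * p ^ Suc m)"
    using assms(1,2) by (intro summable_mult) (simp add: summable_geometric)
  show "continuous_on {-1..1} (\<lambda>c. theta_factor p e c m)" for m
    unfolding theta_factor_def by (intro continuous_intros)
  show "norm (theta_factor p e c m - 1) \<le> 6 * p ^ Suc m" if "c \<in> {-1..1}" for m c
    unfolding real_norm_def by (rule theta_factor_dist_one) (use assms that in auto)
  show "theta_factor p e c m \<noteq> 0" if "c \<in> {-1..1}" for m c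
    using assms(1,2) assms(3)[of m] that theta_factor_pos[of p e m c] by (simp add: abs_le_iff)
qed simp

lemma theta1_eq_theta_prod:
  "theta1 p z = 2 * p powr (1/4) * sin z * theta_prod p (\<lambda>m. 2 * Suc m) (- cos (2 * z))"
proof -
  have "\<And>m. (4::nat) * Suc m = 2 * (2 * Suc m)"
    by simp
  then show ?thesis
    unfolding theta1_def theta_prod_def theta_factor_def by (simp only: mult_minus_right diff_conv_add_uminus)
qed

lemma theta2_eq_theta_prod:
  "theta2 p z = 2 * p powr (1/4) * cos z * theta_prod p (\<lambda>m. 2 * Suc m) (cos (2 * z))"
proof -
  have "\<And>m. (4::nat) * Suc m = 2 * (2 * Suc m)"
    by simp
  then show ?thesis
    unfolding theta2_def theta_prod_def theta_factor_def by (simp only: mult_minus_right diff_conv_add_uminus)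
qed

lemma theta3_eq_theta_prod:
  "theta3 p z = theta_prod p (\<lambda>m. 2 * Suc m - 1) (cos (2 * z))"
proof -
  have "\<And>m. (4::nat) * Suc m - 2 = 2 * (2 * Suc m - 1)"
    by simp
  then show ?thesis
    unfolding theta3_def theta_prod_def theta_factor_def by (simp only: mult_minus_right diff_conv_add_uminus)
qed

lemma theta4_eq_theta_prod:
  "theta4 p z = theta_prod p (\<lambda>m. 2 * Suc m - 1) (- cos (2 * z))"
proof -
  have "\<And>m. (4::nat) * Suc m - 2 = 2 * (2 * Suc m - 1)"
    by simp
  then show ?thesis
    unfolding theta4_def theta_prod_def theta_factor_def by (simp only: mult_minus_right diff_conv_add_uminus)
qed

lemma theta1_pos:
  assumes "0 < p" "p < 1" "0 < sin z"
  shows "0 < theta1 p z"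
  using assms theta_prod_pos[of p "\<lambda>m. 2 * Suc m" "- cos (2 * z)"]
  by (simp add: theta1_eq_theta_prod)

lemma theta2_pos:
  assumes "0 < p" "p < 1" "0 < cos z"
  shows "0 < theta2 p z"
  using assms theta_prod_pos[of p "\<lambda>m. 2 * Suc m" "cos (2 * z)"]
  by (simp add: theta2_eq_theta_prod)

lemma theta3_pos:
  assumes "0 < p" "p < 1"
  shows "0 < theta3 p z"
  using assms theta_prod_pos[of p "\<lambda>m. 2 * Suc m - 1" "cos (2 * z)"]
  by (simp add: theta3_eq_theta_prod)

lemma theta4_pos:
  assumes "0 < p" "p < 1"
  shows "0 < theta4 p z"
  using assms theta_prod_pos[of p "\<lambda>m. 2 * Suc m - 1" "- cos (2 * z)"]
  by (simp add: theta4_eq_theta_prod)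

lemma theta1_has_derivative_at_0:
  assumes "0 < p" "p < 1"
  shows "(theta1 p has_field_derivative 2 * p powr (1/4) * theta_prod p (\<lambda>m. 2 * Suc m) (- 1)) (at 0)"
proof -
  have "continuous_on UNIV (\<lambda>z. theta_prod p (\<lambda>m. 2 * Suc m) (- cos (2 * z)))"
    using assms by (intro continuous_on_compose2[OF continuous_on_theta_prod]) (auto intro!: continuous_intros)
  then have "isCont (\<lambda>z. theta_prod p (\<lambda>m. 2 * Suc m) (- cos (2 * z))) 0"
    by (simp add: continuous_on_eq_continuous_at)
  then have "((\<lambda>z. 2 * p powr (1/4) * sin z * theta_prod p (\<lambda>m. 2 * Suc m) (- cos (2 * z)))
      has_field_derivative 2 * p powr (1/4) * 1 * theta_prod p (\<lambda>m. 2 * Suc m) (- cos (2 * 0))) (at 0)"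
    by (intro has_field_derivative_mult_vanishing) (auto intro!: derivative_eq_intros)
  then show ?thesis
    by (simp add: theta1_eq_theta_prod[abs_def])
qed

lemma deriv_theta1_0_pos:
  assumes "0 < p" "p < 1"
  shows "0 < deriv (theta1 p) 0"
  using assms theta_prod_pos[of p "\<lambda>m. 2 * Suc m" "- 1"]
  by (simp add: DERIV_imp_deriv[OF theta1_has_derivative_at_0])

lemma rtheta1_pos:
  assumes "0 < p" "p < 1" "0 < \<alpha>" "0 < z" "\<alpha> * z < 2 * pi"
  shows "0 < rtheta p \<alpha> 1 z"
proof -
  have "0 < sin (\<alpha> / 2 * z)"
    using assms by (intro sin_gt_zero) auto
  then show ?thesis
    using assms theta1_pos deriv_theta1_0_pos by (simp add: rtheta_def)
qed

lemma rtheta2_pos: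
  assumes "0 < p" "p < 1" "\<bar>\<alpha> * z\<bar> < pi"
  shows "0 < rtheta p \<alpha> 2 z"
proof -
  have "0 < cos (\<alpha> / 2 * z)"
    using assms by (intro cos_gt_zero_pi) (auto simp: abs_less_iff)
  then show ?thesis
    using assms theta2_pos[of p 0] theta2_pos[of p "\<alpha> / 2 * z"] by (simp add: rtheta_def)
qed

lemma rtheta_pos_if_ge_3:
  assumes "0 < p" "p < 1" "3 \<le> r"
  shows "0 < rtheta p \<alpha> r z"
  using assms theta3_pos theta4_pos by (simp add: rtheta_def)

lemma rtheta_pi_div_pos:
  assumes "0 < p" "p < 1" "0 < S" "r \<in> {1..4}"
    and "r = 1 \<Longrightarrow> 0 < z \<and> z < 2 * S" and "r = 2 \<Longrightarrow> \<bar>z\<bar> < S"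
  shows "0 < rtheta p (pi / S) r z"
proof -
  consider "r = 1" | "r = 2" | "3 \<le> r"
    using assms(4) by fastforce
  then show ?thesis
  proof cases
    case 1
    with assms show ?thesis
      unfolding \<open>r = 1\<close> by (intro rtheta1_pos) (auto simp: field_simps)
  next
    case 2
    with assms show ?thesis
      unfolding \<open>r = 2\<close> by (intro rtheta2_pos) (auto simp: abs_mult field_simps)
  qed (use assms in \<open>simp add: rtheta_pos_if_ge_3\<close>)
qed

theorem mainTheorem1:
  fixes p :: real and u v :: "nat \<Rightarrow> real" and M :: nat and \<alpha> :: real
  assumes "0 < p" "p < 1"
    and "\<forall>r\<in>{1,2}. u r > 0 \<and> \<bar>v r\<bar> < u r + 1/2"
    and "\<alpha> = pi / (u 1 + u 2 + real M)"
  shows "\<forall>k\<in>{1..M}.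
    (\<forall>r\<in>{1..4::nat}. rtheta p \<alpha> r (u 1 + real k) \<noteq> 0 \<and> rtheta p \<alpha> r (u 1 - 1/2 + real k) \<noteq> 0
                        \<and> rtheta p \<alpha> r (u 2 + real k) \<noteq> 0 \<and> rtheta p \<alpha> r (u 2 - 1/2 + real k) \<noteq> 0) \<and>
    (\<Prod>r\<in>{1..4::nat}. (rtheta p \<alpha> r (u 1 - u r + real k) * rtheta p \<alpha> r (u 1 - v r - 1/2 + real k))
                      / (rtheta p \<alpha> r (u 1 + real k) * rtheta p \<alpha> r (u 1 - 1/2 + real k))) > 0 \<and>
    (\<Prod>r\<in>{1..4::nat}. (rtheta p \<alpha> r (u 2 - u (pi2 r) + real k) * rtheta p \<alpha> r (u 2 - v (pi2 r) - 1/2 + real k))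
                      / (rtheta p \<alpha> r (u 2 + real k) * rtheta p \<alpha> r (u 2 - 1/2 + real k))) > 0"
proof -
  define S where "S = u 1 + u 2 + real M"
  have u: "0 < u 1" "0 < u 2" "\<bar>v 1\<bar> < u 1 + 1/2" "\<bar>v 2\<bar> < u 2 + 1/2"
    using assms(3) by auto
  then have "0 < S"
    by (simp add: S_def)
  have pos: "0 < rtheta p \<alpha> r z"
    if "r \<in> {1..4}" "r = 1 \<Longrightarrow> 0 < z \<and> z < 2 * S" "r = 2 \<Longrightarrow> \<bar>z\<bar> < S" for r z
    unfolding assms(4) S_def[symmetric] using assms(1,2) \<open>0 < S\<close> that by (rule rtheta_pi_div_pos)
  show ?thesis
    by (intro ballI conjI prod_pos divide_pos_pos mult_pos_pos dual_order.strict_implies_not_eq pos)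
      (use u in \<open>auto simp: S_def pi2_def abs_less_iff\<close>)
qed

end
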